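(* Fix a simple spectrum $\lambda_1<\dots<\lambda_n$ and for $\epsilon>0$ let $\mathcal{D}(\epsilon)=\{T\in\mathcal{T}_\Lambda : |T_{n,n-1}|<\epsilon\}$. There exist $\epsilon_q>0$ and $C_q>0$ such that $\mathbf{W}(\mathcal{D}(\epsilon))\subset\mathcal{D}(\epsilon)$ for every $\epsilon\le\epsilon_q$, and $|(\mathbf{W}(T))_{n,n-1}|\le C_q|T_{n,n-1}|^2$ for all $T\in\mathcal{D}(\epsilon_q)$ (at which $\mathbf{W}$ is defined). Furthermore, for any subset $\mathcal{D}_c\subset\mathcal{D}(\epsilon_q)$ whose closure is disjoint from $\mathcal{Y}_0$, there exists $C_c>0$ such that $|(\mathbf{W}(T))_{n,n-1}|\le C_c|T_{n,n-1}|^3$ for all $T\in\mathcal{D}_c$ (at which $\mathbf{W}$ is defined).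
   Context: $\Lambda=\mathrm{diag}(\lambda_1,\dots,\lambda_n)$ and $\mathcal{T}_\Lambda$ is the set of real symmetric tridiagonal $n\times n$ matrices with spectrum $\{\lambda_1,\dots,\lambda_n\}$. For $T\in\mathcal{T}_\Lambda$, $\omega_+(T)\ge\omega_-(T)$ are the eigenvalues of the bottom $2\times2$ principal block of $T$, and Wilkinson's shift $\omega(T)$ is the one of them closest to $T_{n,n}$; it is well defined off $\mathcal{Y}=\{T: T_{n,n}=T_{n-1,n-1}\}$. $\mathcal{Y}_0=\{T\in\mathcal{T}_\Lambda: T_{n,n}=T_{n-1,n-1},\ T_{n,n-1}=0\}$ (the set where $\omega_+=\omega_-$). Wilkinson's step is $\mathbf{W}(T)=Q^*TQ$ where $T-\omega(T)I=QR$ with $Q$ orthogonal and $R$ upper triangular with positive diagonal; it is defined when $T\notin\mathcal{Y}$ and $\omega(T)$ is not an eigenvalue of $T$, and is extended by continuity to matrices with $T_{n,n-1}=0$, $T\notin\mathcal{Y}$ (removable singularities). $\mathbf{W}(T)\in\mathcal{T}_\Lambda$. *)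

theory Defs
  imports "HOL-Analysis.Analysis"
begin

text \<open>Matrices are n x n real matrices indexed by a finite linearly ordered type 'n
  (n = CARD('n)); the order on 'n is the index order 1 < 2 < ... < n.
  Entry (i,j) of T is T $ i $ j (row i, column j).\<close>

definition last_idx :: "'n::{finite,linorder}" where
  "last_idx = (GREATEST i. True)"

definition pen_idx :: "'n::{finite,linorder}" where
  "pen_idx = (GREATEST i. i \<noteq> (last_idx::'n))"

definition adj_idx :: "'n::{finite,linorder} \<Rightarrow> 'n \<Rightarrow> bool" where
  "adj_idx i j \<longleftrightarrow> i < j \<and> \<not> (\<exists>k. i < k \<and> k < j)"

definition tridiagonal :: "real^('n::{finite,linorder})^('n::{finite,linorder}) \<Rightarrow> bool" where
  "tridiagonal T \<longleftrightarrow> transpose T = T \<and>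
     (\<forall>i j. T $ i $ j \<noteq> 0 \<longrightarrow> i = j \<or> adj_idx i j \<or> adj_idx j i)"

definition is_eigenvalue :: "real^('n::{finite,linorder})^('n::{finite,linorder}) \<Rightarrow> real \<Rightarrow> bool" where
  "is_eigenvalue T \<mu> \<longleftrightarrow> (\<exists>v. v \<noteq> 0 \<and> T *v v = \<mu> *\<^sub>R v)"

definition TLam :: "('n::{finite,linorder} \<Rightarrow> real) \<Rightarrow> (real^('n::{finite,linorder})^('n::{finite,linorder})) set" where
  "TLam lam = {T. tridiagonal T \<and> {\<mu>. is_eigenvalue T \<mu>} = range lam}"

definition subd :: "real^('n::{finite,linorder})^('n::{finite,linorder}) \<Rightarrow> real" where
  "subd T = T $ last_idx $ pen_idx"

definition omega_plus :: "real^('n::{finite,linorder})^('n::{finite,linorder}) \<Rightarrow> real" where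
  "omega_plus T = (let a = T $ pen_idx $ pen_idx; c = T $ last_idx $ last_idx; b = subd T
     in (a + c) / 2 + sqrt (((a - c) / 2)^2 + b^2))"

definition omega_minus :: "real^('n::{finite,linorder})^('n::{finite,linorder}) \<Rightarrow> real" where
  "omega_minus T = (let a = T $ pen_idx $ pen_idx; c = T $ last_idx $ last_idx; b = subd T
     in (a + c) / 2 - sqrt (((a - c) / 2)^2 + b^2))"

text \<open>Wilkinson's shift: the eigenvalue of the bottom 2x2 block closest to T_{n,n}
  (well defined off Y).\<close>
definition wilk_shift :: "real^('n::{finite,linorder})^('n::{finite,linorder}) \<Rightarrow> real" where
  "wilk_shift T = (if \<bar>omega_plus T - T $ last_idx $ last_idx\<bar> < \<bar>omega_minus T - T $ last_idx $ last_idx\<bar>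
                   then omega_plus T else omega_minus T)"

definition Yset :: "(real^('n::{finite,linorder})^('n::{finite,linorder})) set" where
  "Yset = {T. T $ last_idx $ last_idx = T $ pen_idx $ pen_idx}"

definition Y0set :: "('n::{finite,linorder} \<Rightarrow> real) \<Rightarrow> (real^('n::{finite,linorder})^('n::{finite,linorder})) set" where
  "Y0set lam = {T \<in> TLam lam. T $ last_idx $ last_idx = T $ pen_idx $ pen_idx \<and> subd T = 0}"

definition upper_triangular :: "real^('n::{finite,linorder})^('n::{finite,linorder}) \<Rightarrow> bool" where
  "upper_triangular R \<longleftrightarrow> (\<forall>i j. j < i \<longrightarrow> R $ i $ j = 0)"

definition wilk_QR_step :: "real^('n::{finite,linorder})^('n::{finite,linorder}) \<Rightarrow> real^('n::{finite,linorder})^('n::{finite,linorder}) \<Rightarrow> bool" where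
  "wilk_QR_step T W' \<longleftrightarrow> (\<exists>Q R. orthogonal_matrix Q \<and> upper_triangular R \<and> (\<forall>i. R $ i $ i > 0) \<and>
      T - wilk_shift T *\<^sub>R mat 1 = Q ** R \<and> W' = transpose Q ** T ** Q)"

definition wilk_fun :: "real^('n::{finite,linorder})^('n::{finite,linorder}) \<Rightarrow> real^('n::{finite,linorder})^('n::{finite,linorder})" where
  "wilk_fun T = (THE W'. wilk_QR_step T W')"

definition W_dom :: "('n::{finite,linorder} \<Rightarrow> real) \<Rightarrow> (real^('n::{finite,linorder})^('n::{finite,linorder})) set" where
  "W_dom lam = {T \<in> TLam lam. T \<notin> Yset \<and> \<not> is_eigenvalue T (wilk_shift T)}"

text \<open>W is defined at T with value W': either T is in the QR domain, or T is a removable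
  singularity (T_{n,n-1} = 0, T not in Y) and W' is the limit of W from the QR domain.\<close>
definition W_defined :: "('n::{finite,linorder} \<Rightarrow> real) \<Rightarrow> real^('n::{finite,linorder})^('n::{finite,linorder}) \<Rightarrow> real^('n::{finite,linorder})^('n::{finite,linorder}) \<Rightarrow> bool" where
  "W_defined lam T W' \<longleftrightarrow>
     (T \<in> W_dom lam \<and> W' = wilk_fun T) \<or>
     (T \<in> TLam lam \<and> subd T = 0 \<and> T \<notin> Yset \<and> T islimpt W_dom lam \<and>
      (wilk_fun \<longlongrightarrow> W') (at T within W_dom lam))"

definition Dset :: "('n::{finite,linorder} \<Rightarrow> real) \<Rightarrow> real \<Rightarrow> (real^('n::{finite,linorder})^('n::{finite,linorder})) set" where
  "Dset lam \<epsilon> = {T \<in> TLam lam. \<bar>subd T\<bar> < \<epsilon>}"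

end

theory Submission
  imports Defs
begin

(* Write b = T_{n,n-1}, c = T_{n,n} and w for the shift, so that |c - w| <= |b|.  If
   T - wI = QR, the last column q of Q satisfies (T - wI) q = R_{nn} e_n.  Split q = p + t e_n
   with p orthogonal to e_n: tridiagonality makes (T - wI) p and (T - wI) e_n of size O(|b|),
   whereas T - wI expands by half the spectral gap on the orthogonal complement of the
   eigenvector whose eigenvalue is nearest to w.  A combination of p and e_n lies in that
   complement, so |p| = O(|b|).  As W = RQ + wI, the new entry W_{n,n-1} = R_{nn} Q_{n,n-1}
   is O(|b| (b^2 + |c - w|)) = O(b^2).  On a set whose closure misses Y_0, compactness of
   T_Lambda bounds |c - T_{n-1,n-1}| + |b| below, so for small b the identity
   (T_{n-1,n-1} - w)(c - w) = b^2 gives |c - w| = O(b^2) and the bound becomes cubic.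
   At removable singularities the quadratic bound passes to the limit. *)

section \<open>The trailing indices\<close>

lemma last_idx_eq_Max: "(last_idx::'n::{finite,linorder}) = Max UNIV"
  unfolding last_idx_def using Greatest_Max[of "\<lambda>_::'n. True"] by simp

lemma le_last_idx [simp]: "(i::'n::{finite,linorder}) \<le> last_idx"
  unfolding last_idx_eq_Max by simp

lemma ex_ne_last_idx:
  assumes "CARD('n::{finite,linorder}) \<ge> 2"
  shows "\<exists>i::'n. i \<noteq> last_idx"
proof (rule ccontr)
  assume "\<not> ?thesis"
  then have "(UNIV::'n set) = {last_idx}" by auto
  then have "CARD('n) = card {last_idx::'n}" by (rule arg_cong)
  with assms show False by simp
qed

lemma pen_idx_eq_Max:
  assumes "CARD('n::{finite,linorder}) \<ge> 2"
  shows "(pen_idx::'n) = Max {i. i \<noteq> last_idx}"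
  unfolding pen_idx_def using Greatest_Max[of "\<lambda>i::'n. i \<noteq> last_idx"] ex_ne_last_idx[OF assms]
  by simp

lemma pen_idx_ne_last_idx:
  assumes "CARD('n::{finite,linorder}) \<ge> 2"
  shows "(pen_idx::'n) \<noteq> last_idx"
proof -
  have "Max {i::'n. i \<noteq> last_idx} \<in> {i. i \<noteq> last_idx}"
    using ex_ne_last_idx[OF assms] by (intro Max_in) auto
  then show ?thesis using pen_idx_eq_Max[OF assms] by simp
qed

lemma le_pen_idx:
  assumes "CARD('n::{finite,linorder}) \<ge> 2" and "(i::'n) \<noteq> last_idx"
  shows "i \<le> pen_idx"
  unfolding pen_idx_eq_Max[OF assms(1)] using assms(2) by (intro Max_ge) auto

lemma pen_idx_less_last_idx:
  assumes "CARD('n::{finite,linorder}) \<ge> 2"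
  shows "(pen_idx::'n) < last_idx"
  using pen_idx_ne_last_idx[OF assms] le_last_idx[of "pen_idx::'n"] by (simp add: order_le_less)

section \<open>Symmetric tridiagonal matrices\<close>

lemma symmetric_matrix_entry: "transpose A = A \<Longrightarrow> A $ i $ j = A $ j $ i"
  by (metis transpose_def vec_lambda_beta)

lemma inner_symmetric_matrix:
  fixes A :: "real^'n^'n"
  assumes "transpose A = A"
  shows "(A *v x) \<bullet> y = x \<bullet> (A *v y)"
  by (metis assms dot_lmul_matrix transpose_matrix_vector)

lemma symmetric_shift:
  fixes A :: "real^'n^'n"
  assumes "transpose A = A"
  shows "transpose (A - w *\<^sub>R mat 1) = A - w *\<^sub>R mat 1"
  using assms by (simp add: transpose_def vec_eq_iff mat_def)

lemma matrix_vector_mult_axis_component: "((A::real^'n^'m) *v axis i 1) $ k = A $ k $ i"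
  by (simp add: matrix_vector_mult_basis column_def)

lemma norm_sub_axis_component_sq:
  fixes q :: "real^'n"
  shows "norm (q - q $ i *\<^sub>R axis i 1) ^ 2 = norm q ^ 2 - (q $ i)^2"
proof -
  have "orthogonal (q - q $ i *\<^sub>R axis i 1) (q $ i *\<^sub>R axis i 1)"
    by (simp add: orthogonal_def inner_diff_left inner_axis)
  then have "norm q ^ 2 = norm (q - q $ i *\<^sub>R axis i 1) ^ 2 + norm (q $ i *\<^sub>R axis i (1::real)) ^ 2"
    using norm_add_Pythagorean by fastforce
  then show ?thesis by simp
qed

lemma norm_two_axes_le: "norm (a *\<^sub>R axis i 1 + b *\<^sub>R axis j (1::real)) \<le> \<bar>a\<bar> + \<bar>b\<bar>"
  by (rule order_trans[OF norm_triangle_ineq]) (simp add: norm_axis_1)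

lemma tridiagonal_symmetric: "tridiagonal T \<Longrightarrow> transpose T = T"
  unfolding tridiagonal_def by simp

lemma TLam_tridiagonal: "T \<in> TLam lam \<Longrightarrow> tridiagonal T"
  unfolding TLam_def by simp

lemma tridiagonal_entry_eq_0:
  assumes "tridiagonal T" and "j < m" and "m < k"
  shows "T $ k $ j = 0"
  using assms unfolding tridiagonal_def adj_idx_def by (metis order.strict_trans less_irrefl)

lemma tridiagonal_last_column:
  fixes T :: "real^('n::{finite,linorder})^('n::{finite,linorder})"
  assumes "CARD('n) \<ge> 2" and "tridiagonal T" and "k \<noteq> last_idx" and "k \<noteq> pen_idx"
  shows "T $ k $ last_idx = 0"
proof (rule ccontr)
  assume "T $ k $ last_idx \<noteq> 0"
  then have "adj_idx k last_idx \<or> adj_idx last_idx k"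
    using assms(2,3) unfolding tridiagonal_def by blast
  moreover have "k < pen_idx" using le_pen_idx[OF assms(1,3)] assms(4) by simp
  then have "\<not> adj_idx k last_idx"
    using pen_idx_less_last_idx[OF assms(1)] unfolding adj_idx_def by blast
  moreover have "\<not> adj_idx last_idx k"
    using le_last_idx[of k] unfolding adj_idx_def by (simp add: not_less)
  ultimately show False by blast
qed

lemma tridiagonal_shift_last_axis:
  fixes T :: "real^('n::{finite,linorder})^('n::{finite,linorder})"
  assumes "CARD('n) \<ge> 2" and "tridiagonal T"
  shows "(T - w *\<^sub>R mat 1) *v axis last_idx 1 =
    subd T *\<^sub>R axis pen_idx 1 + (T $ last_idx $ last_idx - w) *\<^sub>R axis last_idx 1"
proof (subst vec_eq_iff, intro allI)
  fix k
  have "T $ pen_idx $ last_idx = subd T"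
    using symmetric_matrix_entry[OF tridiagonal_symmetric[OF assms(2)]] by (simp add: subd_def)
  then show "((T - w *\<^sub>R mat 1) *v axis last_idx 1) $ k =
      (subd T *\<^sub>R axis pen_idx 1 + (T $ last_idx $ last_idx - w) *\<^sub>R axis last_idx 1) $ k"
    using tridiagonal_last_column[OF assms, of k] pen_idx_ne_last_idx[OF assms(1)]
    unfolding matrix_vector_mult_axis_component
    by (cases "k = last_idx"; cases "k = pen_idx") (auto simp: axis_def mat_def)
qed

lemma norm_tridiagonal_shift_last_axis_le:
  fixes T :: "real^('n::{finite,linorder})^('n::{finite,linorder})"
  assumes "CARD('n) \<ge> 2" and "tridiagonal T" and "\<bar>T $ last_idx $ last_idx - w\<bar> \<le> \<bar>subd T\<bar>"
  shows "norm ((T - w *\<^sub>R mat 1) *v axis last_idx 1) \<le> 2 * \<bar>subd T\<bar>"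
  unfolding tridiagonal_shift_last_axis[OF assms(1,2)]
  using norm_two_axes_le[of "subd T" "pen_idx::'n" "T $ last_idx $ last_idx - w" last_idx] assms(3)
  by linarith

text \<open>By symmetry, the last entry of (T - wI)(q - q_n e_n) is b q_{n-1}.\<close>

lemma norm_tridiagonal_shift_residual_le:
  fixes T :: "real^('n::{finite,linorder})^('n::{finite,linorder})"
  assumes card: "CARD('n) \<ge> 2" and tri: "tridiagonal T"
    and q: "norm q = 1" "(T - w *\<^sub>R mat 1) *v q = r *\<^sub>R axis last_idx 1"
  shows "norm ((T - w *\<^sub>R mat 1) *v (q - q $ last_idx *\<^sub>R axis last_idx 1)) \<le> 2 * \<bar>subd T\<bar>"
proof -
  define S where "S = T - w *\<^sub>R mat 1"
  define b where "b = subd T"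
  define e where "e = axis (last_idx::'n) (1::real)"
  define t where "t = q $ last_idx"
  define p where "p = q - t *\<^sub>R e"
  have symS: "transpose S = S"
    unfolding S_def by (rule symmetric_shift[OF tridiagonal_symmetric[OF tri]])
  have Se: "S *v e = b *\<^sub>R axis pen_idx 1 + (T $ last_idx $ last_idx - w) *\<^sub>R e"
    unfolding S_def b_def e_def by (rule tridiagonal_shift_last_axis[OF card tri])
  have "p $ last_idx = 0" by (simp add: p_def t_def e_def)
  have "S *v p = S *v q - t *\<^sub>R (S *v e)"
    by (simp add: p_def matrix_vector_mult_diff_distrib matrix_vector_mult_scaleR)
  also have "\<dots> = r *\<^sub>R e - t *\<^sub>R (b *\<^sub>R axis pen_idx 1 + (T $ last_idx $ last_idx - w) *\<^sub>R e)"
    using q(2) unfolding Se by (simp add: S_def e_def)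
  finally have Sp: "S *v p =
      (- (t * b)) *\<^sub>R axis pen_idx 1 + (r - t * (T $ last_idx $ last_idx - w)) *\<^sub>R e"
    by (simp add: algebra_simps)
  have "(S *v p) $ last_idx = p \<bullet> (S *v e)"
    using inner_symmetric_matrix[OF symS, of p e] by (simp add: e_def inner_axis)
  also have "\<dots> = b * p $ pen_idx"
    unfolding Se using \<open>p $ last_idx = 0\<close> by (simp add: inner_add_right e_def inner_axis)
  finally have "S *v p = (- (t * b)) *\<^sub>R axis pen_idx 1 + (b * p $ pen_idx) *\<^sub>R e"
    using Sp pen_idx_ne_last_idx[OF card] by (simp add: e_def axis_def)
  moreover have "\<bar>t * b\<bar> + \<bar>b * p $ pen_idx\<bar> \<le> \<bar>b\<bar> + \<bar>b\<bar>"
  proof -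
    have "norm p ^ 2 \<le> 1 ^ 2"
      using norm_sub_axis_component_sq[of q last_idx] q(1) by (simp add: p_def t_def e_def)
    then have "\<bar>p $ pen_idx\<bar> \<le> 1"
      using component_le_norm_cart[of p pen_idx] power2_le_imp_le[of "norm p" 1] by simp
    moreover have "\<bar>t\<bar> \<le> 1" using component_le_norm_cart[of q last_idx] q(1) by (simp add: t_def)
    ultimately show ?thesis
      unfolding abs_mult by (intro add_mono mult_left_le_one_le mult_right_le_one_le) auto
  qed
  ultimately show ?thesis
    using norm_two_axes_le[of "- (t * b)" "pen_idx::'n" "b * p $ pen_idx" last_idx]
    by (simp add: S_def b_def p_def t_def e_def)
qed

lemma symmetric_hessenberg_tridiagonal:
  fixes A :: "real^('n::{finite,linorder})^('n::{finite,linorder})"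
  assumes "transpose A = A" and "\<And>i j m. j < m \<Longrightarrow> m < i \<Longrightarrow> A $ i $ j = 0"
  shows "tridiagonal A"
  unfolding tridiagonal_def adj_idx_def
  using assms symmetric_matrix_entry[OF assms(1)] by (metis linorder_neqE)

lemma closed_tridiagonal:
  "closed {T::real^('n::{finite,linorder})^('n::{finite,linorder}). tridiagonal T}" (is "closed ?S")
proof -
  have "?S = (\<Inter>i. \<Inter>j. {T. T $ i $ j = T $ j $ i} \<inter>
      {T. T $ i $ j = 0 \<or> i = j \<or> adj_idx i j \<or> adj_idx j i})"
    unfolding tridiagonal_def by (auto simp: vec_eq_iff transpose_def)
  moreover have "closed {T::real^_^_. T $ i $ j = 0 \<or> i = j \<or> adj_idx i j \<or> adj_idx j i}"
    for i j
    by (cases "i = j \<or> adj_idx i j \<or> adj_idx j i")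
      (auto intro!: closed_Collect_eq continuous_on_component continuous_on_id)
  ultimately show ?thesis
    by (auto intro!: closed_INT closed_Int closed_Collect_eq continuous_on_component continuous_on_id)
qed

section \<open>Orthonormal eigenbases\<close>

locale eigenbasis =
  fixes T :: "real^'n^'n" and lam :: "'n \<Rightarrow> real" and V :: "'n \<Rightarrow> real^'n"
  assumes symmetric: "transpose T = T" and inj_lam: "inj lam"
    and norm_V: "\<And>i. norm (V i) = 1" and eigen_V: "\<And>i. T *v V i = lam i *\<^sub>R V i"
begin

lemma inner_V: "V i \<bullet> V j = (if i = j then 1 else 0)"
proof (cases "i = j")
  case False
  have "lam i * (V i \<bullet> V j) = lam j * (V i \<bullet> V j)"
    using inner_symmetric_matrix[OF symmetric, of "V i" "V j"] by (simp add: eigen_V)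
  moreover have "lam i \<noteq> lam j" using inj_lam False by (auto dest: injD)
  ultimately show ?thesis using False by simp
qed (use norm_V[of j] in \<open>simp add: norm_eq_1\<close>)

lemma expansion: "x = (\<Sum>i\<in>UNIV. (x \<bullet> V i) *\<^sub>R V i)"
proof -
  define M where "M = (\<chi> r c. V c $ r)"
  have "transpose M ** M = mat 1"
    by (simp add: M_def matrix_matrix_mult_def transpose_def mat_def vec_eq_iff
        inner_V[symmetric] inner_vec_def)
  then have "orthogonal_matrix M" by (simp add: orthogonal_matrix)
  then have "M ** transpose M = mat 1" by (simp add: orthogonal_matrix_def)
  then have "x = M *v (transpose M *v x)" by (metis matrix_vector_mul_assoc matrix_vector_mul_lid)
  also have "\<dots> = (\<Sum>i\<in>UNIV. (x \<bullet> V i) *\<^sub>R V i)"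
    by (simp add: matrix_mult_sum column_def M_def transpose_def matrix_vector_mult_def
        inner_vec_def mult.commute scalar_mult_eq_scaleR del: transpose_matrix_vector)
  finally show ?thesis .
qed

lemma norm_sq_eq: "norm (\<Sum>i\<in>UNIV. c i *\<^sub>R V i) ^ 2 = (\<Sum>i\<in>UNIV. (c i)^2)"
  unfolding power2_norm_eq_inner
  by (simp add: inner_sum_left inner_sum_right inner_V if_distrib power2_eq_square cong: if_cong)

lemma norm_sq_expansion: "norm x ^ 2 = (\<Sum>i\<in>UNIV. (x \<bullet> V i)^2)"
  using norm_sq_eq[of "\<lambda>i. x \<bullet> V i"] expansion[of x] by simp

lemma eigenvalue_in_range:
  assumes "T *v x = \<mu> *\<^sub>R x" and "x \<noteq> 0"
  shows "\<mu> \<in> range lam"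
proof (rule ccontr)
  assume \<mu>: "\<mu> \<notin> range lam"
  have "x \<bullet> V i = 0" for i
  proof -
    have "\<mu> * (x \<bullet> V i) = lam i * (x \<bullet> V i)"
      using inner_symmetric_matrix[OF symmetric, of x "V i"] by (simp add: assms(1) eigen_V)
    moreover have "\<mu> \<noteq> lam i" using \<mu> by auto
    ultimately show ?thesis by simp
  qed
  then have "x = 0" using expansion[of x] by simp
  with assms(2) show False ..
qed

lemma shift_mult_V: "(T - w *\<^sub>R mat 1) *v V i = (lam i - w) *\<^sub>R V i"
  by (simp add: matrix_vector_mult_diff_rdistrib eigen_V scaleR_diff_left
      flip: scaleR_matrix_vector_assoc)

lemma shift_mult_expansion:
  "(T - w *\<^sub>R mat 1) *v x = (\<Sum>i\<in>UNIV. ((x \<bullet> V i) * (lam i - w)) *\<^sub>R V i)"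
proof -
  have "(T - w *\<^sub>R mat 1) *v x = (T - w *\<^sub>R mat 1) *v (\<Sum>i\<in>UNIV. (x \<bullet> V i) *\<^sub>R V i)"
    using expansion[of x] by (rule arg_cong)
  also have "\<dots> = (\<Sum>i\<in>UNIV. (x \<bullet> V i) *\<^sub>R ((T - w *\<^sub>R mat 1) *v V i))"
    by (simp only: vec.sum matrix_vector_mult_scaleR)
  also have "\<dots> = (\<Sum>i\<in>UNIV. ((x \<bullet> V i) * (lam i - w)) *\<^sub>R V i)"
    by (simp only: shift_mult_V scaleR_scaleR)
  finally show ?thesis .
qed

lemma norm_shift_mult_sq:
  "norm ((T - w *\<^sub>R mat 1) *v x) ^ 2 = (\<Sum>i\<in>UNIV. ((x \<bullet> V i) * (lam i - w))^2)"
  unfolding shift_mult_expansion by (rule norm_sq_eq)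

lemma norm_shift_mult_le:
  assumes "\<And>i. \<bar>lam i - w\<bar> \<le> M"
  shows "norm ((T - w *\<^sub>R mat 1) *v x) \<le> M * norm x"
proof (rule power2_le_imp_le)
  have "0 \<le> M" using order_trans[OF abs_ge_zero assms] .
  then have "(lam i - w)^2 \<le> M^2" for i using assms[of i] by (simp add: power2_le_iff_abs_le)
  then have "norm ((T - w *\<^sub>R mat 1) *v x) ^ 2 \<le> (\<Sum>i\<in>UNIV. M^2 * (x \<bullet> V i)^2)"
    unfolding norm_shift_mult_sq power_mult_distrib mult.commute[of "(x \<bullet> V _)^2"]
    by (intro sum_mono mult_right_mono) simp_all
  then show "norm ((T - w *\<^sub>R mat 1) *v x) ^ 2 \<le> (M * norm x) ^ 2"
    by (simp add: power_mult_distrib norm_sq_expansion sum_distrib_left)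
  show "0 \<le> M * norm x" using \<open>0 \<le> M\<close> by simp
qed

lemma norm_shift_mult_ge:
  assumes "0 \<le> m" and "\<And>i. i \<noteq> j \<Longrightarrow> m \<le> \<bar>lam i - w\<bar>" and "x \<bullet> V j = 0"
  shows "m * norm x \<le> norm ((T - w *\<^sub>R mat 1) *v x)"
proof (rule power2_le_imp_le)
  have "(m * norm x) ^ 2 = (\<Sum>i\<in>UNIV. m^2 * (x \<bullet> V i)^2)"
    by (simp add: power_mult_distrib norm_sq_expansion sum_distrib_left)
  also have "\<dots> \<le> norm ((T - w *\<^sub>R mat 1) *v x) ^ 2"
    unfolding norm_shift_mult_sq power_mult_distrib
  proof (intro sum_mono)
    fix i
    show "m^2 * (x \<bullet> V i)^2 \<le> (x \<bullet> V i)^2 * (lam i - w)^2"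
    proof (cases "i = j")
      case False
      then have "m^2 \<le> (lam i - w)^2"
        using assms(1) assms(2)[OF False] abs_le_square_iff[of m "lam i - w"] by simp
      then show ?thesis by (simp add: mult_right_mono mult.commute[of "(x \<bullet> V i)^2"])
    qed (simp add: assms(3))
  qed
  finally show "(m * norm x) ^ 2 \<le> norm ((T - w *\<^sub>R mat 1) *v x) ^ 2" .
qed simp

end

lemma closed_has_unit_eigenvector: "closed {T::real^'n^'n. \<exists>v. norm v = 1 \<and> T *v v = c *\<^sub>R v}"
proof -
  have "closed {p::(real^'n) \<times> (real^'n^'n). snd p *v fst p = c *\<^sub>R fst p}"
    unfolding matrix_vector_mult_def
    by (intro closed_Collect_eq continuous_intros continuous_on_component)
  then have "closed {T. \<exists>v. v \<in> sphere (0::real^'n) 1 \<and> (v, T) \<in> {p. snd p *v fst p = c *\<^sub>R fst p}}"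
    by (intro closed_compact_projection compact_sphere)
  then show ?thesis by simp
qed

lemma is_eigenvalue_orthogonal_conj:
  fixes A Q :: "real^('n::{finite,linorder})^('n::{finite,linorder})"
  assumes "orthogonal_matrix Q" and "is_eigenvalue A \<mu>"
  shows "is_eigenvalue (transpose Q ** A ** Q) \<mu>"
proof -
  obtain v where "v \<noteq> 0" "A *v v = \<mu> *\<^sub>R v" using assms(2) unfolding is_eigenvalue_def by blast
  have QQ: "Q ** transpose Q = mat 1" using assms(1) by (simp add: orthogonal_matrix_def)
  then have "transpose Q ** A ** Q ** transpose Q = transpose Q ** A"
    by (metis matrix_mul_assoc matrix_mul_rid)
  then have "(transpose Q ** A ** Q) *v (transpose Q *v v) = transpose Q *v (A *v v)"
    by (metis matrix_vector_mul_assoc)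
  also have "\<dots> = \<mu> *\<^sub>R (transpose Q *v v)"
    by (simp add: \<open>A *v v = \<mu> *\<^sub>R v\<close> matrix_vector_mult_scaleR del: transpose_matrix_vector)
  finally have "(transpose Q ** A ** Q) *v (transpose Q *v v) = \<mu> *\<^sub>R (transpose Q *v v)" .
  moreover have "transpose Q *v v \<noteq> 0"
  proof
    assume "transpose Q *v v = 0"
    then have "(Q ** transpose Q) *v v = 0" by (metis matrix_vector_mul_assoc matrix_vector_mult_0_right)
    with QQ \<open>v \<noteq> 0\<close> show False by simp
  qed
  ultimately show ?thesis unfolding is_eigenvalue_def by blast
qed

lemma is_eigenvalue_orthogonal_conj_iff:
  fixes A Q :: "real^('n::{finite,linorder})^('n::{finite,linorder})"
  assumes "orthogonal_matrix Q"
  shows "is_eigenvalue (transpose Q ** A ** Q) \<mu> \<longleftrightarrow> is_eigenvalue A \<mu>"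
proof
  have "orthogonal_matrix (transpose Q)" using assms by (simp add: orthogonal_matrix_def)
  moreover have "transpose (transpose Q) ** (transpose Q ** A ** Q) ** transpose Q = A"
    using assms unfolding orthogonal_matrix_def
    by (metis matrix_mul_assoc matrix_mul_lid matrix_mul_rid transpose_transpose)
  ultimately show "is_eigenvalue A \<mu>" if "is_eigenvalue (transpose Q ** A ** Q) \<mu>"
    using is_eigenvalue_orthogonal_conj[OF _ that] by metis
qed (rule is_eigenvalue_orthogonal_conj[OF assms])

lemma norm_le_if_coercive_off_hyperplane:
  fixes f :: "'a::real_inner \<Rightarrow> 'b::real_normed_vector"
  assumes "linear f" and "0 < m"
    and coercive: "\<And>v. v \<bullet> u = 0 \<Longrightarrow> m * norm v \<le> norm (f v)"
    and "x \<bullet> y = 0" and "norm y = 1" and "norm x \<le> 1"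
    and fx: "norm (f x) \<le> M" and fy: "norm (f y) \<le> M"
  shows "norm x \<le> 2 * M / m"
proof -
  define \<alpha> where "\<alpha> = y \<bullet> u"
  define \<beta> where "\<beta> = - (x \<bullet> u)"
  define v where "v = \<alpha> *\<^sub>R x + \<beta> *\<^sub>R y"
  define \<mu> where "\<mu> = max \<bar>\<alpha>\<bar> \<bar>\<beta>\<bar>"
  have "0 \<le> M" using fy norm_ge_zero order_trans by blast
  have "v \<bullet> u = 0" by (simp add: v_def \<alpha>_def \<beta>_def inner_diff_left)
  have "norm v ^ 2 = norm (\<alpha> *\<^sub>R x) ^ 2 + norm (\<beta> *\<^sub>R y) ^ 2"
    unfolding v_def using assms(4) by (intro norm_add_Pythagorean) (simp add: orthogonal_def)
  then have v2: "norm v ^ 2 = (\<bar>\<alpha>\<bar> * norm x) ^ 2 + \<bar>\<beta>\<bar> ^ 2"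
    using assms(5) by (simp add: power_mult_distrib)
  have "\<bar>\<alpha>\<bar> * norm x \<le> norm v"
    by (rule power2_le_imp_le) (use v2 in simp_all)
  moreover have "\<bar>\<beta>\<bar> * norm x \<le> norm v"
  proof -
    have "\<bar>\<beta>\<bar> \<le> norm v" by (rule power2_le_imp_le) (use v2 in simp_all)
    then show ?thesis using assms(6) mult_left_le[of "norm x" "\<bar>\<beta>\<bar>"] by simp
  qed
  ultimately have "\<mu> * norm x \<le> norm v" by (simp add: \<mu>_def max_mult_distrib_right)
  have "m * (\<mu> * norm x) \<le> m * norm v"
    using \<open>\<mu> * norm x \<le> norm v\<close> \<open>0 < m\<close> by simp
  also have "\<dots> \<le> norm (f v)" by (rule coercive[OF \<open>v \<bullet> u = 0\<close>])
  also have "\<dots> \<le> \<bar>\<alpha>\<bar> * norm (f x) + \<bar>\<beta>\<bar> * norm (f y)"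
    unfolding v_def linear_add[OF assms(1)] linear_scale[OF assms(1)]
    by (metis norm_scaleR norm_triangle_ineq)
  also have "\<dots> \<le> \<mu> * M + \<mu> * M"
    unfolding \<mu>_def using fx fy by (intro add_mono mult_mono) auto
  finally have "m * (\<mu> * norm x) \<le> 2 * \<mu> * M" by (simp add: mult_ac)
  show ?thesis
  proof (cases "\<mu> = 0")
    case True
    then have "x \<bullet> u = 0" by (simp add: \<mu>_def \<beta>_def)
    then have "m * norm x \<le> M" using coercive fx order_trans by blast
    with \<open>0 < m\<close> \<open>0 \<le> M\<close> show ?thesis by (simp add: field_simps)
  next
    case False
    then have "\<mu> > 0" by (simp add: \<mu>_def)
    with \<open>m * (\<mu> * norm x) \<le> 2 * \<mu> * M\<close> have "m * norm x \<le> 2 * M"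
      by (simp add: algebra_simps)
    with \<open>0 < m\<close> show ?thesis by (simp add: field_simps)
  qed
qed

section \<open>QR factorization\<close>

lemma finite_linorder_less_induct [case_names less]:
  fixes P :: "'a::{finite,linorder} \<Rightarrow> bool"
  assumes "\<And>j. (\<And>i. i < j \<Longrightarrow> P i) \<Longrightarrow> P j"
  shows "P j"
proof (induction "card {i. i < j}" arbitrary: j rule: less_induct)
  case less
  show ?case
  proof (rule assms)
    fix i assume "i < j"
    then have "{k. k < i} \<subset> {k. k < j}" by auto
    then have "card {k. k < i} < card {k. k < j}" by (simp add: psubset_card_mono)
    then show "P i" by (rule less)
  qed
qed

lemma inner_orthonormal_residual:
  fixes q :: "'i \<Rightarrow> 'a::real_inner"
  assumes "finite A" and "\<forall>i\<in>A. \<forall>j\<in>A. q i \<bullet> q j = (if i = j then 1 else 0)" and "j \<in> A"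
  shows "(x - (\<Sum>i\<in>A. (x \<bullet> q i) *\<^sub>R q i)) \<bullet> q j = 0"
proof -
  have "(\<Sum>i\<in>A. (x \<bullet> q i) *\<^sub>R q i) \<bullet> q j = (\<Sum>i\<in>A. (x \<bullet> q i) * (if i = j then 1 else 0))"
    using assms(2,3) by (simp add: inner_sum_left)
  also have "\<dots> = x \<bullet> q j" using assms(1,3) by (simp add: if_distrib cong: if_cong)
  finally show ?thesis by (simp add: inner_diff_left)
qed

definition upper_orthonormalization ::
    "('i::linorder \<Rightarrow> 'a::real_inner) \<Rightarrow> 'i set \<Rightarrow> ('i \<Rightarrow> 'a) \<Rightarrow> ('i \<Rightarrow> 'i \<Rightarrow> real) \<Rightarrow> bool" where
  "upper_orthonormalization s A q r \<longleftrightarrow>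
    (\<forall>i\<in>A. \<forall>j\<in>A. q i \<bullet> q j = (if i = j then 1 else 0)) \<and>
    (\<forall>j\<in>A. s j = (\<Sum>i\<in>{i \<in> A. i \<le> j}. r i j *\<^sub>R q i)) \<and> (\<forall>j\<in>A. 0 < r j j) \<and>
    q ` A \<subseteq> span (s ` A)"

lemma upper_orthonormalization_insert:
  assumes gs: "upper_orthonormalization s A q r" and "finite A" and b: "\<forall>a\<in>A. a < b"
    and indep: "s b \<notin> span (s ` A)"
  shows "\<exists>q' r'. upper_orthonormalization s (insert b A) q' r'"
proof -
  from gs have
    on: "\<forall>i\<in>A. \<forall>j\<in>A. q i \<bullet> q j = (if i = j then 1 else 0)" and
    cols: "\<forall>j\<in>A. s j = (\<Sum>i\<in>{i \<in> A. i \<le> j}. r i j *\<^sub>R q i)" and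
    pos: "\<forall>j\<in>A. 0 < r j j" and spq: "q ` A \<subseteq> span (s ` A)"
    unfolding upper_orthonormalization_def by blast+
  have "b \<notin> A" using b by blast
  define w where "w = s b - (\<Sum>i\<in>A. (s b \<bullet> q i) *\<^sub>R q i)"
  have proj: "(\<Sum>i\<in>A. (s b \<bullet> q i) *\<^sub>R q i) \<in> span (s ` A)"
    using spq by (intro span_sum span_scale) auto
  then have "w \<noteq> 0" using indep by (auto simp: w_def)
  define q' where "q' = q(b := w /\<^sub>R norm w)"
  define r' where "r' = (\<lambda>i j. if j = b then (if i = b then norm w else s b \<bullet> q i) else r i j)"
  have "(w /\<^sub>R norm w) \<bullet> (w /\<^sub>R norm w) = 1"
    using \<open>w \<noteq> 0\<close> norm_eq_1[of "w /\<^sub>R norm w"] by simp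
  then have "q' i \<bullet> q' j = (if i = j then 1 else 0)" if "i \<in> insert b A" "j \<in> insert b A" for i j
    using that on inner_orthonormal_residual[OF \<open>finite A\<close> on, of _ "s b"] \<open>b \<notin> A\<close>
    by (auto simp: q'_def w_def inner_commute)
  moreover have "s j = (\<Sum>i\<in>{i \<in> insert b A. i \<le> j}. r' i j *\<^sub>R q' i)" if "j \<in> insert b A" for j
  proof (cases "j = b")
    case True
    have "{i \<in> insert b A. i \<le> b} = insert b A" using b by auto
    then have "(\<Sum>i\<in>{i \<in> insert b A. i \<le> j}. r' i j *\<^sub>R q' i) = w + (\<Sum>i\<in>A. (s b \<bullet> q i) *\<^sub>R q i)"
      using True \<open>finite A\<close> \<open>b \<notin> A\<close> \<open>w \<noteq> 0\<close> by (auto simp: r'_def q'_def intro!: sum.cong)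
    then show ?thesis using True by (simp add: w_def)
  next
    case False
    then have "j \<in> A" using that by simp
    then have "{i \<in> insert b A. i \<le> j} = {i \<in> A. i \<le> j}" using b by force
    then show ?thesis using False cols \<open>j \<in> A\<close> \<open>b \<notin> A\<close> by (auto simp: r'_def q'_def intro!: sum.cong)
  qed
  moreover have "0 < r' j j" if "j \<in> insert b A" for j
    using that pos \<open>w \<noteq> 0\<close> by (auto simp: r'_def)
  moreover have "q' ` insert b A \<subseteq> span (s ` insert b A)"
  proof -
    have "span (s ` A) \<subseteq> span (s ` insert b A)" by (intro span_mono) auto
    moreover have "s b \<in> span (s ` insert b A)" by (intro span_base) simp
    ultimately have "w \<in> span (s ` insert b A)" unfolding w_def using proj by (blast intro: span_diff)
    then show ?thesis using spq \<open>span (s ` A) \<subseteq> _\<close> by (auto simp: q'_def intro: span_scale)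
  qed
  ultimately show ?thesis unfolding upper_orthonormalization_def by blast
qed

lemma upper_orthonormalization_exists:
  fixes s :: "'i::linorder \<Rightarrow> 'a::real_inner"
  assumes "finite A" and "\<And>j. j \<in> A \<Longrightarrow> s j \<notin> span (s ` {i \<in> A. i < j})"
  shows "\<exists>q r. upper_orthonormalization s A q r"
  using assms
proof (induction A rule: finite_linorder_max_induct)
  case empty
  show ?case by (simp add: upper_orthonormalization_def)
next
  case (insert b A)
  have "{i \<in> insert b A. i < j} = {i \<in> A. i < j}" if "j \<in> A" for j
    using insert.hyps(2) that by auto
  then have "s j \<notin> span (s ` {i \<in> A. i < j})" if "j \<in> A" for j
    using insert.prems[of j] that by simp
  then have "\<exists>q r. upper_orthonormalization s A q r" by (rule insert.IH)
  moreover have "{i \<in> insert b A. i < b} = A" using insert.hyps(2) by auto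
  then have "s b \<notin> span (s ` A)" using insert.prems[of b] by simp
  ultimately show ?case using upper_orthonormalization_insert insert.hyps(1,2) by blast
qed

lemma column_not_in_span_columns:
  fixes S :: "real^'n^'m"
  assumes "\<And>x. S *v x = 0 \<Longrightarrow> x = 0" and "j \<notin> B"
  shows "column j S \<notin> span ((\<lambda>i. column i S) ` B)"
proof
  assume "column j S \<in> span ((\<lambda>i. column i S) ` B)"
  also have "(\<lambda>i. column i S) ` B = (*v) S ` (\<lambda>i. axis i 1) ` B"
    by (auto simp: matrix_vector_mult_basis image_image)
  also have "span \<dots> = (*v) S ` span ((\<lambda>i. axis i 1) ` B)"
    by (rule span_linear_image[OF matrix_vector_mul_linear])
  finally obtain x where x: "x \<in> span ((\<lambda>i. axis i 1) ` B)" and "column j S = S *v x" by blast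
  then have "S *v (axis j 1 - x) = 0"
    by (simp add: matrix_vector_mult_diff_distrib matrix_vector_mult_basis)
  then have "x = axis j 1" using assms(1) by fastforce
  moreover have "x $ j = 0"
    using x assms(2) by (induction rule: span_induct) (auto simp: subspace_def axis_def)
  ultimately show False by simp
qed

lemma QR_exists:
  fixes S :: "real^('n::{finite,linorder})^('n::{finite,linorder})"
  assumes "\<And>x. S *v x = 0 \<Longrightarrow> x = 0"
  obtains Q R where "orthogonal_matrix Q" "upper_triangular R" "\<And>i. 0 < R $ i $ i" "S = Q ** R"
proof -
  have "column j S \<notin> span ((\<lambda>i. column i S) ` {i \<in> UNIV. i < j})" for j
    using column_not_in_span_columns[OF assms, where j = j and B = "{i. i < j}"] by simp
  then obtain q r where
    on: "\<forall>i j. q i \<bullet> q j = (if i = j then 1 else 0)" and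
    cols: "\<forall>j. column j S = (\<Sum>i\<in>{i. i \<le> j}. r i j *\<^sub>R q i)" and
    pos: "\<forall>j. 0 < r j (j::'n)"
    using upper_orthonormalization_exists[of UNIV "\<lambda>j. column j S"]
    unfolding upper_orthonormalization_def by auto
  define Q where "Q = (\<chi> i j. q j $ i)"
  define R where "R = (\<chi> i j. if i \<le> j then r i j else 0)"
  show ?thesis
  proof
    have "column j Q = q j" for j by (simp add: Q_def column_def vec_eq_iff)
    then show "orthogonal_matrix Q"
      unfolding orthogonal_matrix_orthonormal_columns using on
      by (auto simp: orthogonal_def norm_eq_1)
    show "upper_triangular R" unfolding upper_triangular_def R_def by auto
    show "0 < R $ i $ i" for i unfolding R_def using pos by auto
    have "(Q ** R) $ k $ j = column j S $ k" for k j
    proof -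
      have "(Q ** R) $ k $ j = (\<Sum>i\<in>UNIV. if i \<le> j then r i j * q i $ k else 0)"
        by (simp add: matrix_matrix_mult_def Q_def R_def if_distrib mult.commute cong: if_cong)
      also have "\<dots> = (\<Sum>i\<in>{i. i \<le> j}. r i j * q i $ k)"
        by (simp add: sum.inter_filter[symmetric])
      finally show ?thesis using cols by (simp add: sum_component)
    qed
    then show "S = Q ** R" by (simp add: vec_eq_iff column_def)
  qed
qed

lemma column_matrix_mult: "column j ((A::real^'n^'m) ** B) = (\<Sum>i\<in>UNIV. B $ i $ j *\<^sub>R column i A)"
  by (simp add: vec_eq_iff column_def matrix_matrix_mult_def sum_component mult.commute)

lemma upper_triangular_column_sum:
  fixes R :: "real^('n::{finite,linorder})^('n::{finite,linorder})" and f :: "'n \<Rightarrow> real^'m"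
  assumes "upper_triangular R"
  shows "(\<Sum>i\<in>UNIV. R $ i $ j *\<^sub>R f i) = (\<Sum>i\<in>{i. i < j}. R $ i $ j *\<^sub>R f i) + R $ j $ j *\<^sub>R f j"
proof -
  have "(\<Sum>i\<in>UNIV. R $ i $ j *\<^sub>R f i) = (\<Sum>i\<in>insert j {i. i < j}. R $ i $ j *\<^sub>R f i)"
    using assms unfolding upper_triangular_def
    by (intro sum.mono_neutral_right) (auto simp: not_less order_le_less)
  then show ?thesis by (simp add: add.commute)
qed

lemma orthogonal_matrix_column_inner:
  fixes Q :: "real^'n^'n"
  assumes "orthogonal_matrix Q"
  shows "column i Q \<bullet> column k Q = (if i = k then 1 else 0)"
  using assms unfolding orthogonal_matrix_orthonormal_columns by (auto simp: orthogonal_def norm_eq_1)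

lemma QR_unique:
  fixes S Q1 R1 Q2 R2 :: "real^('n::{finite,linorder})^('n::{finite,linorder})"
  assumes Q1: "orthogonal_matrix Q1" and R1: "upper_triangular R1" "\<And>i. 0 < R1 $ i $ i"
    and S1: "S = Q1 ** R1"
    and Q2: "orthogonal_matrix Q2" and R2: "upper_triangular R2" "\<And>i. 0 < R2 $ i $ i"
    and S2: "S = Q2 ** R2"
  shows "Q1 = Q2"
proof -
  have R_inner: "R $ i $ j = column i Q \<bullet> column j S" if "orthogonal_matrix Q" "S = Q ** R"
    for Q R i j
    using that by (simp add: column_matrix_mult inner_sum_right orthogonal_matrix_column_inner
        if_distrib cong: if_cong)
  have "column j Q1 = column j Q2" for j
  proof (induction j rule: finite_linorder_less_induct)
    case (less j)
    then have "R1 $ i $ j = R2 $ i $ j" if "i < j" for i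
      using R_inner[OF Q1 S1] R_inner[OF Q2 S2] that by simp
    then have "(\<Sum>i\<in>{i. i < j}. R1 $ i $ j *\<^sub>R column i Q1) =
        (\<Sum>i\<in>{i. i < j}. R2 $ i $ j *\<^sub>R column i Q2)"
      using less.IH by (intro sum.cong) auto
    then have "R1 $ j $ j *\<^sub>R column j Q1 = R2 $ j $ j *\<^sub>R column j Q2"
      using arg_cong[OF S1, of "column j"] arg_cong[OF S2, of "column j"]
      unfolding column_matrix_mult upper_triangular_column_sum[OF R1(1)]
        upper_triangular_column_sum[OF R2(1)]
      by simp
    moreover have "norm (column j Q1) = 1" "norm (column j Q2) = 1"
      using Q1 Q2 orthogonal_matrix_orthonormal_columns by blast+
    ultimately have "R1 $ j $ j = R2 $ j $ j"
      using arg_cong[of _ _ norm] R1(2)[of j] R2(2)[of j] by (metis abs_of_pos norm_scaleR mult_1_right)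
    then show ?case
      using \<open>R1 $ j $ j *\<^sub>R column j Q1 = R2 $ j $ j *\<^sub>R column j Q2\<close> R1(2)[of j] by simp
  qed
  then show ?thesis by (simp add: vec_eq_iff column_def)
qed

lemma matrix_add_rdistrib: "((A::real^'n^'m) + B) ** C = A ** C + B ** C"
  by (simp add: vec_eq_iff matrix_matrix_mult_def sum.distrib distrib_right)

lemma QR_similar_RQ:
  fixes A Q R :: "real^'n^'n"
  assumes "orthogonal_matrix Q" and "A - w *\<^sub>R mat 1 = Q ** R"
  shows "transpose Q ** A ** Q = R ** Q + w *\<^sub>R mat 1"
proof -
  have A: "A = Q ** R + w *\<^sub>R mat 1" using assms(2) by (simp add: algebra_simps)
  have QQ: "transpose Q ** Q = mat 1" using assms(1) by (simp add: orthogonal_matrix)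
  have "transpose Q ** (Q ** R) ** Q = R ** Q"
    by (simp add: matrix_mul_assoc[symmetric] QQ) (simp add: matrix_mul_assoc QQ)
  moreover have "transpose Q ** (w *\<^sub>R mat 1) ** Q = w *\<^sub>R mat 1"
    by (simp add: matrix_scalar_ac scalar_matrix_assoc[symmetric] QQ)
  ultimately show ?thesis
    unfolding A by (simp only: matrix_add_ldistrib matrix_add_rdistrib)
qed

lemma upper_triangular_last_row:
  fixes R :: "real^('n::{finite,linorder})^('n::{finite,linorder})"
  assumes "upper_triangular R" and "k \<noteq> last_idx"
  shows "R $ last_idx $ k = 0"
  using assms le_last_idx[of k] unfolding upper_triangular_def by (simp add: order_le_less)

lemma upper_triangular_mult_last_row:
  fixes R Q :: "real^('n::{finite,linorder})^('n::{finite,linorder})"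
  assumes "upper_triangular R"
  shows "(R ** Q) $ last_idx $ j = R $ last_idx $ last_idx * Q $ last_idx $ j"
proof -
  have "(R ** Q) $ last_idx $ j = (\<Sum>k\<in>UNIV. R $ last_idx $ k * Q $ k $ j)"
    by (simp add: matrix_matrix_mult_def)
  also have "\<dots> = (\<Sum>k\<in>UNIV. if k = (last_idx::'n) then R $ last_idx $ last_idx * Q $ last_idx $ j else 0)"
    using upper_triangular_last_row[OF assms] by (intro sum.cong) auto
  finally show ?thesis by simp
qed

text \<open>For symmetric S = QR we have SQ = R^T, whose last column is a multiple of the last axis.\<close>

lemma symmetric_QR_last_column:
  fixes S Q R :: "real^('n::{finite,linorder})^('n::{finite,linorder})"
  assumes "transpose S = S" and "orthogonal_matrix Q" and "upper_triangular R" and "S = Q ** R"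
  shows "S *v column last_idx Q = R $ last_idx $ last_idx *\<^sub>R axis last_idx 1"
proof -
  have "S ** Q = transpose R ** (transpose Q ** Q)"
    by (metis assms(1,4) matrix_mul_assoc matrix_transpose_mul)
  then have SQ: "S ** Q = transpose R" using assms(2) by (simp add: orthogonal_matrix)
  have "S *v column last_idx Q = transpose R *v axis last_idx 1"
    by (simp add: SQ[symmetric] matrix_vector_mult_basis[symmetric] matrix_vector_mul_assoc)
  also have "\<dots> = R $ last_idx $ last_idx *\<^sub>R axis last_idx 1"
    using upper_triangular_last_row[OF assms(3)]
    unfolding vec_eq_iff matrix_vector_mult_axis_component by (auto simp: transpose_def axis_def)
  finally show ?thesis .
qed

lemma QR_last_diag_eq:
  fixes T Q R :: "real^('n::{finite,linorder})^('n::{finite,linorder})"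
  assumes "CARD('n) \<ge> 2" and tri: "tridiagonal T"
    and Q: "orthogonal_matrix Q" and R: "upper_triangular R" and QR: "T - w *\<^sub>R mat 1 = Q ** R"
  shows "R $ last_idx $ last_idx =
    subd T * Q $ pen_idx $ last_idx + (T $ last_idx $ last_idx - w) * Q $ last_idx $ last_idx"
proof -
  define S where "S = T - w *\<^sub>R mat 1"
  have symS: "transpose S = S"
    unfolding S_def by (rule symmetric_shift[OF tridiagonal_symmetric[OF tri]])
  have "R $ last_idx $ last_idx = (S *v column last_idx Q) \<bullet> axis last_idx 1"
    using symmetric_QR_last_column[OF symS Q R] QR by (simp add: S_def inner_axis)
  also have "\<dots> = column last_idx Q \<bullet> (S *v axis last_idx 1)"
    by (rule inner_symmetric_matrix[OF symS])
  also have "\<dots> = subd T * Q $ pen_idx $ last_idx + (T $ last_idx $ last_idx - w) * Q $ last_idx $ last_idx"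
    unfolding S_def tridiagonal_shift_last_axis[OF assms(1) tri]
    by (simp add: inner_add_right inner_axis column_def mult.commute)
  finally show ?thesis .
qed

lemma subd_QR_step_eq:
  fixes T Q R :: "real^('n::{finite,linorder})^('n::{finite,linorder})"
  assumes "CARD('n) \<ge> 2" and "orthogonal_matrix Q" and "upper_triangular R"
    and "T - w *\<^sub>R mat 1 = Q ** R"
  shows "subd (transpose Q ** T ** Q) = R $ last_idx $ last_idx * Q $ last_idx $ pen_idx"
  unfolding QR_similar_RQ[OF assms(2,4)] subd_def
  using upper_triangular_mult_last_row[OF assms(3), of Q] pen_idx_ne_last_idx[OF assms(1)]
  by (simp add: mat_def)

lemma orthogonal_matrix_entry_sq_le:
  fixes Q :: "real^'n^'n"
  assumes "orthogonal_matrix Q" and "j \<noteq> i"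
  shows "(Q $ i $ j)^2 \<le> 1 - (Q $ i $ i)^2"
proof -
  have "norm (row i Q) = 1" using assms(1) orthogonal_matrix_orthonormal_rows by blast
  then have "(\<Sum>k\<in>UNIV. (Q $ i $ k)^2) = 1"
    by (simp add: norm_eq_1 inner_vec_def row_def power2_eq_square)
  moreover have "(\<Sum>k\<in>{i, j}. (Q $ i $ k)^2) \<le> (\<Sum>k\<in>UNIV. (Q $ i $ k)^2)"
    by (rule sum_mono2) auto
  ultimately show ?thesis using assms(2) by simp
qed

lemma QR_Q_hessenberg:
  fixes T Q R :: "real^('n::{finite,linorder})^('n::{finite,linorder})"
  assumes T: "tridiagonal T" and R: "upper_triangular R" "\<And>i. R $ i $ i \<noteq> 0"
    and QR: "T - w *\<^sub>R mat 1 = Q ** R"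
  shows "j < m \<Longrightarrow> m < k \<Longrightarrow> Q $ k $ j = 0"
proof (induction j arbitrary: m k rule: finite_linorder_less_induct)
  case (less j)
  have summand: "Q $ k $ l * R $ l $ j = (if l = j then Q $ k $ j * R $ j $ j else 0)" for l
  proof (cases l j rule: linorder_cases)
    case less
    then show ?thesis using less.IH[of l j k] \<open>j < m\<close> \<open>m < k\<close> by simp
  next
    case greater
    then show ?thesis using R(1) unfolding upper_triangular_def by simp
  qed simp
  have "(Q ** R) $ k $ j = (\<Sum>l\<in>UNIV. Q $ k $ l * R $ l $ j)"
    by (simp add: matrix_matrix_mult_def)
  also have "\<dots> = Q $ k $ j * R $ j $ j"
    by (subst sum.cong[OF refl summand]) simp_all
  moreover have "(T - w *\<^sub>R mat 1) $ k $ j = 0"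
    using tridiagonal_entry_eq_0[OF T less.prems] less.prems by (simp add: mat_def)
  ultimately show ?case using QR R(2)[of j] by simp
qed

lemma QR_step_TLam:
  fixes T Q R :: "real^('n::{finite,linorder})^('n::{finite,linorder})"
  assumes T: "T \<in> TLam lam" and Q: "orthogonal_matrix Q"
    and R: "upper_triangular R" "\<And>i. 0 < R $ i $ i" and QR: "T - w *\<^sub>R mat 1 = Q ** R"
  shows "transpose Q ** T ** Q \<in> TLam lam"
proof -
  have tri: "tridiagonal T" using TLam_tridiagonal[OF T] .
  have "transpose (transpose Q ** T ** Q) = transpose Q ** T ** Q"
    by (simp add: matrix_transpose_mul tridiagonal_symmetric[OF tri] matrix_mul_assoc)
  moreover have "(transpose Q ** T ** Q) $ i $ j = 0" if "j < m" "m < i" for i j m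
  proof -
    have "R $ i $ k * Q $ k $ j = 0" for k
    proof (cases "k < i")
      case True
      then show ?thesis using R(1) unfolding upper_triangular_def by simp
    next
      case False
      then have "m < k" using that(2) by simp
      moreover have "R $ l $ l \<noteq> 0" for l using R(2)[of l] by simp
      ultimately show ?thesis using QR_Q_hessenberg[OF tri R(1) _ QR that(1)] by simp
    qed
    then have "(R ** Q) $ i $ j = 0" unfolding matrix_matrix_mult_def by (simp add: sum.neutral)
    moreover have "i \<noteq> j" using that by simp
    ultimately show ?thesis unfolding QR_similar_RQ[OF Q QR] by (simp add: mat_def)
  qed
  ultimately have "tridiagonal (transpose Q ** T ** Q)" by (rule symmetric_hessenberg_tridiagonal)
  moreover have "{\<mu>. is_eigenvalue (transpose Q ** T ** Q) \<mu>} = {\<mu>. is_eigenvalue T \<mu>}"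
    using is_eigenvalue_orthogonal_conj_iff[OF Q] by simp
  ultimately show ?thesis using T unfolding TLam_def by simp
qed

section \<open>Wilkinson's shift\<close>

lemma closest_eigenvalue_2x2:
  fixes a b c :: real
  defines "s \<equiv> sqrt (((a - c) / 2)^2 + b^2)"
  defines "wp \<equiv> (a + c) / 2 + s" and "wm \<equiv> (a + c) / 2 - s"
  defines "w \<equiv> (if \<bar>wp - c\<bar> < \<bar>wm - c\<bar> then wp else wm)"
  shows "\<bar>c - w\<bar> \<le> \<bar>b\<bar>" and "(a - w) * (c - w) = b^2"
proof -
  define d where "d = (a - c) / 2"
  have s2: "s^2 = d^2 + b^2" unfolding s_def d_def by simp
  have "\<bar>wp - c\<bar> * \<bar>wm - c\<bar> = b^2"
  proof -
    have "(wp - c) * (wm - c) = - (b^2)"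
      using s2 by (simp add: wp_def wm_def d_def field_simps power2_eq_square)
    then show ?thesis by (metis abs_minus_cancel abs_mult abs_power2)
  qed
  moreover have "\<bar>c - w\<bar> ^ 2 \<le> \<bar>wp - c\<bar> * \<bar>wm - c\<bar>"
  proof (cases "\<bar>wp - c\<bar> < \<bar>wm - c\<bar>")
    case True
    then have "\<bar>c - w\<bar> = \<bar>wp - c\<bar>" by (simp add: w_def abs_minus_commute)
    then show ?thesis using True by (metis abs_ge_zero less_imp_le mult_left_mono power2_eq_square)
  next
    case False
    then have "\<bar>c - w\<bar> = \<bar>wm - c\<bar>" by (simp add: w_def abs_minus_commute)
    then show ?thesis using False by (metis abs_ge_zero not_less mult_right_mono power2_eq_square)
  qed
  ultimately have "\<bar>c - w\<bar> ^ 2 \<le> \<bar>b\<bar> ^ 2" by simp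
  then show "\<bar>c - w\<bar> \<le> \<bar>b\<bar>" by (rule power2_le_imp_le) simp
  have "(a - wp) * (c - wp) = b^2" and "(a - wm) * (c - wm) = b^2"
    using s2 by (simp_all add: wp_def wm_def d_def field_simps power2_eq_square)
  then show "(a - w) * (c - w) = b^2" unfolding w_def by simp
qed

lemma wilk_shift_near_last_diag: "\<bar>T $ last_idx $ last_idx - wilk_shift T\<bar> \<le> \<bar>subd T\<bar>"
  and wilk_shift_product:
    "(T $ pen_idx $ pen_idx - wilk_shift T) * (T $ last_idx $ last_idx - wilk_shift T) = (subd T)^2"
  using closest_eigenvalue_2x2[where a = "T $ pen_idx $ pen_idx" and b = "subd T" and c = "T $ last_idx $ last_idx"]
  unfolding wilk_shift_def omega_plus_def omega_minus_def Let_def by simp_all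

definition Y0_gauge :: "real^('n::{finite,linorder})^('n::{finite,linorder}) \<Rightarrow> real" where
  "Y0_gauge T = \<bar>T $ last_idx $ last_idx - T $ pen_idx $ pen_idx\<bar> + \<bar>subd T\<bar>"

text \<open>Since (a - w)(c - w) = b^2, the shift is quadratically close to c as soon as a - w is
  bounded away from zero.\<close>

lemma wilk_shift_near_last_diag_sq:
  assumes "\<delta> \<le> Y0_gauge T" and "\<bar>subd T\<bar> < \<delta> / 4"
  shows "\<bar>T $ last_idx $ last_idx - wilk_shift T\<bar> \<le> 2 / \<delta> * (subd T)^2"
proof -
  define a c w where "a = T $ pen_idx $ pen_idx" and "c = T $ last_idx $ last_idx"
    and "w = wilk_shift T"
  have "\<bar>c - w\<bar> \<le> \<bar>subd T\<bar>" using wilk_shift_near_last_diag by (simp add: c_def w_def)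
  then have "\<delta> / 2 \<le> \<bar>a - w\<bar>" using assms unfolding a_def c_def Y0_gauge_def by linarith
  moreover have "\<bar>c - w\<bar> * \<bar>a - w\<bar> = (subd T)^2"
    using wilk_shift_product[of T] unfolding a_def c_def w_def
    by (metis abs_mult abs_power2 mult.commute power2_abs)
  moreover have "0 < \<delta>" using assms(2) by linarith
  ultimately have "\<bar>c - w\<bar> * (\<delta> / 2) \<le> (subd T)^2"
    by (metis abs_ge_zero mult_left_mono)
  with \<open>0 < \<delta>\<close> show ?thesis by (simp add: c_def w_def field_simps)
qed

lemma wilk_fun_QR:
  assumes "T \<in> W_dom lam"
  obtains Q R where "orthogonal_matrix Q" "upper_triangular R" "\<And>i. 0 < R $ i $ i"
    "T - wilk_shift T *\<^sub>R mat 1 = Q ** R" "wilk_fun T = transpose Q ** T ** Q"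
proof -
  have "x = 0" if "(T - wilk_shift T *\<^sub>R mat 1) *v x = 0" for x
  proof (rule ccontr)
    assume "x \<noteq> 0"
    moreover have "T *v x = wilk_shift T *\<^sub>R x"
      using that by (simp add: matrix_vector_mult_diff_rdistrib flip: scaleR_matrix_vector_assoc)
    ultimately show False using assms unfolding W_dom_def is_eigenvalue_def by blast
  qed
  then obtain Q R where QR: "orthogonal_matrix Q" "upper_triangular R" "\<And>i. 0 < R $ i $ i"
    "T - wilk_shift T *\<^sub>R mat 1 = Q ** R"
    using QR_exists by blast
  have "wilk_QR_step T (transpose Q ** T ** Q)" unfolding wilk_QR_step_def using QR by blast
  moreover have "W' = transpose Q ** T ** Q" if "wilk_QR_step T W'" for W'
    using that QR_unique[OF _ _ _ _ QR(1-4)] unfolding wilk_QR_step_def by metis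
  ultimately have "wilk_fun T = transpose Q ** T ** Q"
    unfolding wilk_fun_def by (rule the_equality)
  with QR that show ?thesis by blast
qed

section \<open>Matrices with a simple spectrum\<close>

locale simple_spectrum =
  fixes lam :: "'n::{finite,linorder} \<Rightarrow> real"
  assumes card_ge_2: "CARD('n) \<ge> 2" and inj_lam: "inj lam"
begin

definition gap :: real where
  "gap = Min ((\<lambda>(i, j). \<bar>lam i - lam j\<bar>) ` {(i, j). i \<noteq> j})"

definition kappa :: real where "kappa = 8 / gap"

lemma gap_le: "i \<noteq> j \<Longrightarrow> gap \<le> \<bar>lam i - lam j\<bar>"
  unfolding gap_def by (rule Min_le) (auto intro: image_eqI[of _ _ "(i, j)"])

lemma gap_pos: "0 < gap"
proof -
  have "{(i, j). i \<noteq> (j::'n)} \<noteq> {}"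
    using pen_idx_ne_last_idx[OF card_ge_2] by blast
  then have "gap \<in> (\<lambda>(i, j). \<bar>lam i - lam j\<bar>) ` {(i, j). i \<noteq> j}"
    unfolding gap_def by (intro Min_in) auto
  then show ?thesis using inj_lam by (auto dest: injD)
qed

lemma kappa_pos: "0 < kappa"
  using gap_pos by (simp add: kappa_def)

lemma TLam_eigenbasis:
  assumes "T \<in> TLam lam"
  obtains V where "eigenbasis T lam V"
proof -
  have "\<exists>v. norm v = 1 \<and> T *v v = lam i *\<^sub>R v" for i
  proof -
    have "is_eigenvalue T (lam i)" using assms unfolding TLam_def by auto
    then obtain v where "v \<noteq> 0" "T *v v = lam i *\<^sub>R v" unfolding is_eigenvalue_def by auto
    then show ?thesis
      by (intro exI[of _ "v /\<^sub>R norm v"]) (simp add: matrix_vector_mult_scaleR)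
  qed
  then obtain V where "\<And>i. norm (V i) = 1" "\<And>i. T *v V i = lam i *\<^sub>R V i" by metis
  with tridiagonal_symmetric[OF TLam_tridiagonal[OF assms]] inj_lam have "eigenbasis T lam V"
    by (simp add: eigenbasis_def)
  then show ?thesis by (rule that)
qed

lemma TLam_eq_unit_eigenvectors:
  "TLam lam = {T. tridiagonal T} \<inter> (\<Inter>i. {T. \<exists>v. norm v = 1 \<and> T *v v = lam i *\<^sub>R v})"
  (is "_ = ?R")
proof (intro equalityI subsetI)
  fix T assume T: "T \<in> TLam lam"
  obtain V where "eigenbasis T lam V" using TLam_eigenbasis[OF T] .
  then show "T \<in> ?R"
    using T TLam_tridiagonal eigenbasis.norm_V eigenbasis.eigen_V by fastforce
next
  fix T assume "T \<in> ?R"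
  then have tri: "tridiagonal T" and "\<forall>i. \<exists>v. norm v = 1 \<and> T *v v = lam i *\<^sub>R v" by auto
  then obtain V where V: "\<And>i. norm (V i) = 1" "\<And>i. T *v V i = lam i *\<^sub>R V i" by metis
  then have "eigenbasis T lam V"
    using tridiagonal_symmetric[OF tri] inj_lam by (simp add: eigenbasis_def)
  then have "is_eigenvalue T \<mu> \<longleftrightarrow> \<mu> \<in> range lam" for \<mu>
    using eigenbasis.eigenvalue_in_range V unfolding is_eigenvalue_def
    by (metis norm_zero rangeE zero_neq_one)
  then show "T \<in> TLam lam" using tri unfolding TLam_def by auto
qed

lemma compact_TLam: "compact (TLam lam)"
proof -
  define M where "M = (\<Sum>k\<in>UNIV. \<bar>lam k\<bar>)"
  have "norm T \<le> real CARD('n) * M" if T: "T \<in> TLam lam" for T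
  proof -
    obtain V where V: "eigenbasis T lam V" using TLam_eigenbasis[OF T] .
    have "norm (T $ i) \<le> M" for i
    proof -
      have "T $ i = T *v axis i 1"
        using symmetric_matrix_entry[OF eigenbasis.symmetric[OF V]]
        by (simp add: vec_eq_iff matrix_vector_mult_axis_component)
      also have "norm \<dots> \<le> M * norm (axis i (1::real))"
        using eigenbasis.norm_shift_mult_le[OF V, of 0 M "axis i 1"]
          member_le_sum[of _ UNIV "\<lambda>k. \<bar>lam k\<bar>"]
        by (simp add: M_def)
      finally show ?thesis by (simp add: norm_axis_1)
    qed
    then have "(\<Sum>i\<in>UNIV. norm (T $ i)) \<le> real CARD('n) * M"
      using sum_mono[of UNIV "\<lambda>i. norm (T $ i)" "\<lambda>_. M"] by simp
    moreover have "norm T \<le> (\<Sum>i\<in>UNIV. norm (T $ i))"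
      unfolding norm_vec_def by (rule L2_set_le_sum) simp
    ultimately show ?thesis by linarith
  qed
  then have "bounded (TLam lam)" unfolding bounded_iff by blast
  moreover have "closed (TLam lam)"
    unfolding TLam_eq_unit_eigenvectors
    by (intro closed_Int closed_tridiagonal closed_INT closed_has_unit_eigenvector ballI)
  ultimately show ?thesis by (simp add: compact_eq_bounded_closed)
qed

text \<open>Here u is the eigenvector whose eigenvalue is nearest to w.\<close>

lemma TLam_shift_coercive:
  assumes "T \<in> TLam lam"
  obtains u where "\<And>v. v \<bullet> u = 0 \<Longrightarrow> gap / 2 * norm v \<le> norm ((T - w *\<^sub>R mat 1) *v v)"
proof -
  obtain V where V: "eigenbasis T lam V" using TLam_eigenbasis[OF assms] .
  obtain j where j: "\<And>i. \<bar>lam j - w\<bar> \<le> \<bar>lam i - w\<bar>"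
    using ex_is_arg_min_if_finite[of UNIV "\<lambda>i. \<bar>lam i - w\<bar>"] by (auto simp: is_arg_min_linorder)
  have "gap / 2 \<le> \<bar>lam i - w\<bar>" if "i \<noteq> j" for i
    using gap_le[OF that] j[of i] by linarith
  then show ?thesis
    using gap_pos by (intro that[of "V j"] eigenbasis.norm_shift_mult_ge[OF V]) auto
qed

lemma last_column_near_axis:
  assumes T: "T \<in> TLam lam" and shift: "\<bar>T $ last_idx $ last_idx - w\<bar> \<le> \<bar>subd T\<bar>"
    and q: "norm q = 1" "(T - w *\<^sub>R mat 1) *v q = r *\<^sub>R axis last_idx 1"
  shows "norm (q - q $ last_idx *\<^sub>R axis last_idx 1) \<le> kappa * \<bar>subd T\<bar>"
proof -
  define e where "e = axis (last_idx::'n) (1::real)"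
  define p where "p = q - q $ last_idx *\<^sub>R e"
  have tri: "tridiagonal T" using TLam_tridiagonal[OF T] .
  have "p \<bullet> e = 0" by (simp add: p_def e_def inner_axis)
  have "norm e = 1" by (simp add: e_def norm_axis_1)
  have "norm p ^ 2 \<le> 1 ^ 2"
    using norm_sub_axis_component_sq[of q last_idx] q(1) by (simp add: p_def e_def)
  then have "norm p \<le> 1" by (rule power2_le_imp_le) simp
  obtain u where "\<And>v. v \<bullet> u = 0 \<Longrightarrow> gap / 2 * norm v \<le> norm ((T - w *\<^sub>R mat 1) *v v)"
    using TLam_shift_coercive[OF T] by blast
  moreover have "norm ((T - w *\<^sub>R mat 1) *v p) \<le> 2 * \<bar>subd T\<bar>"
    using norm_tridiagonal_shift_residual_le[OF card_ge_2 tri q] by (simp add: p_def e_def)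
  moreover have "norm ((T - w *\<^sub>R mat 1) *v e) \<le> 2 * \<bar>subd T\<bar>"
    using norm_tridiagonal_shift_last_axis_le[OF card_ge_2 tri shift] by (simp add: e_def)
  ultimately have "norm p \<le> 2 * (2 * \<bar>subd T\<bar>) / (gap / 2)"
    using gap_pos \<open>p \<bullet> e = 0\<close> \<open>norm e = 1\<close> \<open>norm p \<le> 1\<close>
    by (intro norm_le_if_coercive_off_hyperplane[where f = "(*v) (T - w *\<^sub>R mat 1)" and u = u
          and x = p and y = e]) (auto intro: matrix_vector_mul_linear)
  then show ?thesis by (simp add: p_def e_def kappa_def)
qed

lemma subd_QR_step_le:
  assumes T: "T \<in> TLam lam" and shift: "\<bar>T $ last_idx $ last_idx - w\<bar> \<le> \<bar>subd T\<bar>"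
    and Q: "orthogonal_matrix Q" and R: "upper_triangular R" and QR: "T - w *\<^sub>R mat 1 = Q ** R"
  shows "\<bar>subd (transpose Q ** T ** Q)\<bar> \<le>
    kappa * \<bar>subd T\<bar> * (kappa * (subd T)^2 + \<bar>T $ last_idx $ last_idx - w\<bar>)"
proof -
  define q where "q = column last_idx Q"
  define \<rho> where "\<rho> = norm (q - q $ last_idx *\<^sub>R axis last_idx 1)"
  have PL: "pen_idx \<noteq> (last_idx::'n)" using pen_idx_ne_last_idx[OF card_ge_2] .
  have tri: "tridiagonal T" using TLam_tridiagonal[OF T] .
  have "norm q = 1" unfolding q_def using Q orthogonal_matrix_orthonormal_columns by blast
  have "(T - w *\<^sub>R mat 1) *v q = R $ last_idx $ last_idx *\<^sub>R axis last_idx 1"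
    unfolding q_def using Q R QR
    by (intro symmetric_QR_last_column symmetric_shift tridiagonal_symmetric[OF tri])
  then have "\<rho> \<le> kappa * \<bar>subd T\<bar>"
    unfolding \<rho>_def using last_column_near_axis[OF T shift \<open>norm q = 1\<close>] by blast
  have "0 \<le> \<rho>" by (simp add: \<rho>_def)
  have "\<bar>Q $ last_idx $ pen_idx\<bar> \<le> \<rho>"
  proof (rule power2_le_imp_le)
    show "\<bar>Q $ last_idx $ pen_idx\<bar>^2 \<le> \<rho>^2"
      using orthogonal_matrix_entry_sq_le[OF Q PL] norm_sub_axis_component_sq[of q last_idx]
        \<open>norm q = 1\<close>
      by (simp add: \<rho>_def q_def column_def)
  qed (rule \<open>0 \<le> \<rho>\<close>)
  have "\<bar>Q $ pen_idx $ last_idx\<bar> \<le> \<rho>"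
    using component_le_norm_cart[of "q - q $ last_idx *\<^sub>R axis last_idx 1" pen_idx] PL
    by (simp add: \<rho>_def q_def column_def axis_def)
  moreover have "\<bar>Q $ last_idx $ last_idx\<bar> \<le> 1"
    using \<open>norm q = 1\<close> component_le_norm_cart[of q last_idx] by (simp add: q_def column_def)
  ultimately have "\<bar>R $ last_idx $ last_idx\<bar> \<le> \<bar>subd T\<bar> * \<rho> + \<bar>T $ last_idx $ last_idx - w\<bar>"
    unfolding QR_last_diag_eq[OF card_ge_2 tri Q R QR]
    by (intro abs_triangle_ineq[THEN order_trans] add_mono)
      (auto simp: abs_mult intro: mult_left_mono mult_right_le_one_le)
  then have "\<bar>subd (transpose Q ** T ** Q)\<bar> \<le> (\<bar>subd T\<bar> * \<rho> + \<bar>T $ last_idx $ last_idx - w\<bar>) * \<rho>"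
    unfolding subd_QR_step_eq[OF card_ge_2 Q R QR] abs_mult
    using \<open>\<bar>Q $ last_idx $ pen_idx\<bar> \<le> \<rho>\<close> \<open>0 \<le> \<rho>\<close> by (intro mult_mono) auto
  also have "\<dots> \<le> (\<bar>subd T\<bar> * (kappa * \<bar>subd T\<bar>) + \<bar>T $ last_idx $ last_idx - w\<bar>) * (kappa * \<bar>subd T\<bar>)"
    using \<open>\<rho> \<le> kappa * \<bar>subd T\<bar>\<close> \<open>0 \<le> \<rho>\<close> by (intro mult_mono add_mono mult_left_mono) auto
  finally show ?thesis by (simp add: power2_eq_square algebra_simps)
qed

definition step_bound :: "((real, 'n) vec, 'n) vec \<Rightarrow> real" where
  "step_bound T =
    kappa * \<bar>subd T\<bar> * (kappa * (subd T)^2 + \<bar>T $ last_idx $ last_idx - wilk_shift T\<bar>)"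

lemma step_bound_nonneg: "0 \<le> step_bound T"
  using kappa_pos by (simp add: step_bound_def)

lemma step_bound_le_quadratic: "step_bound T \<le> kappa * (subd T)^2 * (kappa * \<bar>subd T\<bar> + 1)"
proof -
  have "step_bound T \<le> kappa * \<bar>subd T\<bar> * (kappa * (subd T)^2 + \<bar>subd T\<bar>)"
    unfolding step_bound_def using wilk_shift_near_last_diag kappa_pos
    by (intro mult_left_mono add_left_mono) auto
  then show ?thesis by (simp add: algebra_simps power2_eq_square abs_mult_self_eq)
qed

lemma step_bound_le_cubic:
  assumes "\<delta> \<le> Y0_gauge T" and "\<bar>subd T\<bar> < \<delta> / 4"
  shows "step_bound T \<le> kappa * (kappa + 2 / \<delta>) * \<bar>subd T\<bar>^3"
proof -
  have "step_bound T \<le> kappa * \<bar>subd T\<bar> * (kappa * (subd T)^2 + 2 / \<delta> * (subd T)^2)"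
    unfolding step_bound_def using wilk_shift_near_last_diag_sq[OF assms] kappa_pos
    by (intro mult_left_mono add_left_mono) auto
  then show ?thesis by (simp add: power2_eq_square power3_eq_cube algebra_simps)
qed

lemma wilk_fun_TLam_and_bound:
  assumes "T \<in> W_dom lam"
  shows "wilk_fun T \<in> TLam lam" and "\<bar>subd (wilk_fun T)\<bar> \<le> step_bound T"
proof -
  have T: "T \<in> TLam lam" using assms unfolding W_dom_def by simp
  obtain Q R where QR: "orthogonal_matrix Q" "upper_triangular R" "\<And>i. 0 < R $ i $ i"
    "T - wilk_shift T *\<^sub>R mat 1 = Q ** R" "wilk_fun T = transpose Q ** T ** Q"
    using wilk_fun_QR[OF assms] by blast
  show "wilk_fun T \<in> TLam lam" unfolding QR(5) by (rule QR_step_TLam[OF T QR(1-4)])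
  show "\<bar>subd (wilk_fun T)\<bar> \<le> step_bound T"
    unfolding QR(5) step_bound_def
    by (rule subd_QR_step_le[OF T wilk_shift_near_last_diag QR(1,2,4)])
qed

text \<open>The quadratic bound at nearby points of the QR domain passes to the limit.\<close>

lemma removable_limit:
  assumes "subd T = 0" and "T islimpt W_dom lam"
    and lim: "(wilk_fun \<longlongrightarrow> W') (at T within W_dom lam)"
  shows "W' \<in> TLam lam" and "subd W' = 0"
proof -
  define F where "F = at T within W_dom lam"
  have "F \<noteq> bot" unfolding F_def using assms(2) trivial_limit_within by blast
  have dom: "eventually (\<lambda>x. x \<in> W_dom lam) F" unfolding F_def eventually_at_filter by simp
  show "W' \<in> TLam lam"
    using compact_imp_closed[OF compact_TLam] eventually_mono[OF dom wilk_fun_TLam_and_bound(1)]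
      \<open>F \<noteq> bot\<close> lim[folded F_def]
    by (rule Lim_in_closed_set)
  define B where "B = (\<lambda>x::((real, 'n) vec, 'n) vec. kappa * (subd x)^2 * (kappa * \<bar>subd x\<bar> + 1))"
  have "eventually (\<lambda>x. \<bar>subd (wilk_fun x)\<bar> \<le> B x) F"
    using dom
  proof (rule eventually_mono)
    fix x assume "x \<in> W_dom lam"
    then show "\<bar>subd (wilk_fun x)\<bar> \<le> B x"
      using wilk_fun_TLam_and_bound(2) step_bound_le_quadratic order_trans unfolding B_def by blast
  qed
  moreover have "((\<lambda>x. \<bar>subd (wilk_fun x)\<bar>) \<longlongrightarrow> \<bar>subd W'\<bar>) F"
    unfolding subd_def F_def by (intro tendsto_rabs tendsto_vec_nth lim)
  moreover have "(B \<longlongrightarrow> B T) F"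
    unfolding B_def subd_def F_def by (intro tendsto_intros tendsto_ident_at)
  ultimately have "\<bar>subd W'\<bar> \<le> B T" using \<open>F \<noteq> bot\<close> by (intro tendsto_le) auto
  then show "subd W' = 0" using assms(1) by (simp add: B_def)
qed

lemma W_defined_TLam_and_bound:
  assumes "W_defined lam T W'"
  shows "W' \<in> TLam lam" and "\<bar>subd W'\<bar> \<le> step_bound T"
  using assms wilk_fun_TLam_and_bound removable_limit step_bound_nonneg
  unfolding W_defined_def by auto

lemma W_defined_quadratic:
  assumes "W_defined lam T W'" and "\<bar>subd T\<bar> \<le> 1"
  shows "\<bar>subd W'\<bar> \<le> kappa * (kappa + 1) * (subd T)^2"
proof -
  have "\<bar>subd W'\<bar> \<le> kappa * (subd T)^2 * (kappa * \<bar>subd T\<bar> + 1)"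
    using W_defined_TLam_and_bound(2)[OF assms(1)] step_bound_le_quadratic by (rule order_trans)
  also have "\<dots> \<le> kappa * (subd T)^2 * (kappa + 1)"
    using assms(2) kappa_pos by (intro mult_left_mono add_right_mono) auto
  finally show ?thesis by (simp add: algebra_simps)
qed

lemma separated_from_Y0:
  assumes "Dc \<subseteq> TLam lam" and "closure Dc \<inter> Y0set lam = {}"
  obtains \<delta> where "0 < \<delta>" and "\<And>T. T \<in> Dc \<Longrightarrow> \<delta> \<le> Y0_gauge T"
proof (cases "Dc = {}")
  case False
  have "closure Dc \<subseteq> TLam lam"
    using assms(1) compact_imp_closed[OF compact_TLam] by (rule closure_minimal)
  then have "compact (closure Dc)"
    using compact_TLam by (metis compact_Int_closed closed_closure inf.absorb_iff2)
  moreover have "continuous_on (closure Dc) Y0_gauge"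
    unfolding Y0_gauge_def subd_def by (intro continuous_intros continuous_on_component)
  ultimately obtain T0 where T0: "T0 \<in> closure Dc" "\<And>T. T \<in> closure Dc \<Longrightarrow> Y0_gauge T0 \<le> Y0_gauge T"
    using continuous_attains_inf[of "closure Dc" Y0_gauge] False by auto
  have "0 < Y0_gauge T0"
  proof (rule ccontr)
    assume "\<not> 0 < Y0_gauge T0"
    then have "T0 \<in> Y0set lam"
      using T0(1) \<open>closure Dc \<subseteq> TLam lam\<close> unfolding Y0_gauge_def Y0set_def by auto
    then show False using assms(2) T0(1) by blast
  qed
  then show ?thesis using that T0(2) closure_subset by blast
qed (use that[of 1] in auto)

lemma W_defined_cubic:
  assumes "W_defined lam T W'" and "\<bar>subd T\<bar> \<le> 1" and "0 < \<delta>" and "\<delta> \<le> Y0_gauge T"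
  shows "\<bar>subd W'\<bar> \<le> max (4 * kappa * (kappa + 1) / \<delta>) (kappa * (kappa + 2 / \<delta>)) * \<bar>subd T\<bar>^3"
proof (cases "\<bar>subd T\<bar> < \<delta> / 4")
  case True
  have "\<bar>subd W'\<bar> \<le> kappa * (kappa + 2 / \<delta>) * \<bar>subd T\<bar>^3"
    using W_defined_TLam_and_bound(2)[OF assms(1)] step_bound_le_cubic[OF assms(4) True]
    by (rule order_trans)
  also have "\<dots> \<le> max (4 * kappa * (kappa + 1) / \<delta>) (kappa * (kappa + 2 / \<delta>)) * \<bar>subd T\<bar>^3"
    by (intro mult_right_mono) auto
  finally show ?thesis .
next
  case False
  have "\<bar>subd W'\<bar> \<le> kappa * (kappa + 1) * (subd T)^2"
    by (rule W_defined_quadratic[OF assms(1,2)])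
  also have "\<dots> \<le> kappa * (kappa + 1) * (subd T)^2 * (4 * \<bar>subd T\<bar> / \<delta>)"
  proof -
    have "1 \<le> 4 * \<bar>subd T\<bar> / \<delta>" using False \<open>0 < \<delta>\<close> by (simp add: field_simps)
    moreover have "0 \<le> kappa * (kappa + 1) * (subd T)^2" using kappa_pos by simp
    ultimately show ?thesis using mult_left_mono by fastforce
  qed
  also have "\<dots> = 4 * kappa * (kappa + 1) / \<delta> * \<bar>subd T\<bar>^3"
    by (simp add: power2_eq_square power3_eq_cube)
  also have "\<dots> \<le> max (4 * kappa * (kappa + 1) / \<delta>) (kappa * (kappa + 2 / \<delta>)) * \<bar>subd T\<bar>^3"
    by (intro mult_right_mono) auto
  finally show ?thesis .
qed




lemma W_defined_subd_le:
  assumes "W_defined lam T W'" and "\<bar>subd T\<bar> \<le> 1" and "kappa * (kappa + 1) * \<bar>subd T\<bar> \<le> 1"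
  shows "\<bar>subd W'\<bar> \<le> \<bar>subd T\<bar>"
proof -
  have "\<bar>subd W'\<bar> \<le> kappa * (kappa + 1) * \<bar>subd T\<bar> * \<bar>subd T\<bar>"
    using W_defined_quadratic[OF assms(1,2)] by (simp add: power2_eq_square abs_mult_self_eq mult.assoc)
  also have "\<dots> \<le> 1 * \<bar>subd T\<bar>" using assms(3) by (intro mult_right_mono) auto
  finally show ?thesis by simp
qed

lemma W_defined_cubic_away_from_Y0:
  assumes "Dc \<subseteq> TLam lam" and "\<forall>T\<in>Dc. \<bar>subd T\<bar> \<le> 1" and "closure Dc \<inter> Y0set lam = {}"
  shows "\<exists>Cc > 0. \<forall>T W'. T \<in> Dc \<and> W_defined lam T W' \<longrightarrow> \<bar>subd W'\<bar> \<le> Cc * \<bar>subd T\<bar>^3"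
proof -
  obtain \<delta> where "0 < \<delta>" and "\<And>T. T \<in> Dc \<Longrightarrow> \<delta> \<le> Y0_gauge T"
    using separated_from_Y0[OF assms(1,3)] by blast
  then show ?thesis
    using W_defined_cubic assms(2) kappa_pos
    by (intro exI[of _ "max (4 * kappa * (kappa + 1) / \<delta>) (kappa * (kappa + 2 / \<delta>))"])
      (auto simp: less_max_iff_disj)
qed
end

theorem proposition3p3:
  fixes lam :: "'n::{finite,linorder} \<Rightarrow> real"
  assumes "CARD('n) \<ge> 2"
    and "strict_mono lam"
  shows "\<exists>\<epsilon>q > 0. \<exists>Cq > 0.
     (\<forall>\<epsilon>. 0 < \<epsilon> \<and> \<epsilon> \<le> \<epsilon>q \<longrightarrow>
        (\<forall>T W'. T \<in> Dset lam \<epsilon> \<and> W_defined lam T W' \<longrightarrow> W' \<in> Dset lam \<epsilon>)) \<and>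
     (\<forall>T W'. T \<in> Dset lam \<epsilon>q \<and> W_defined lam T W' \<longrightarrow> \<bar>subd W'\<bar> \<le> Cq * \<bar>subd T\<bar>^2) \<and>
     (\<forall>Dc. Dc \<subseteq> Dset lam \<epsilon>q \<and> closure Dc \<inter> Y0set lam = {} \<longrightarrow>
        (\<exists>Cc > 0. \<forall>T W'. T \<in> Dc \<and> W_defined lam T W' \<longrightarrow> \<bar>subd W'\<bar> \<le> Cc * \<bar>subd T\<bar>^3))"
proof -
  interpret simple_spectrum lam
    using assms by unfold_locales (simp_all add: strict_mono_imp_inj_on)
  define Cq where "Cq = kappa * (kappa + 1)"
  define \<epsilon>q where "\<epsilon>q = min 1 (1 / Cq)"
  have "0 < Cq" using kappa_pos by (simp add: Cq_def)
  then have "0 < \<epsilon>q" and "\<epsilon>q \<le> 1" and "Cq * \<epsilon>q \<le> 1" by (auto simp: \<epsilon>q_def min_def field_simps)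
  have "W' \<in> Dset lam \<epsilon>" if "\<epsilon> \<le> \<epsilon>q" "T \<in> Dset lam \<epsilon>" "W_defined lam T W'" for \<epsilon> T W'
  proof -
    have "\<bar>subd T\<bar> \<le> \<epsilon>q" using that(1,2) by (auto simp: Dset_def)
    then have "Cq * \<bar>subd T\<bar> \<le> 1"
      using \<open>0 < Cq\<close> \<open>Cq * \<epsilon>q \<le> 1\<close> by (meson mult_left_mono less_imp_le order_trans)
    then show ?thesis
      using W_defined_subd_le[OF that(3)] W_defined_TLam_and_bound(1)[OF that(3)] that(1,2) \<open>\<epsilon>q \<le> 1\<close>
      by (fastforce simp: Dset_def Cq_def)
  qed
  moreover have "\<bar>subd W'\<bar> \<le> Cq * \<bar>subd T\<bar>^2" if "T \<in> Dset lam \<epsilon>q" "W_defined lam T W'" for T W'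
    using W_defined_quadratic[OF that(2)] that(1) \<open>\<epsilon>q \<le> 1\<close> by (simp add: Dset_def Cq_def)
  moreover have "\<exists>Cc > 0. \<forall>T W'. T \<in> Dc \<and> W_defined lam T W' \<longrightarrow> \<bar>subd W'\<bar> \<le> Cc * \<bar>subd T\<bar>^3"
    if "Dc \<subseteq> Dset lam \<epsilon>q" and "closure Dc \<inter> Y0set lam = {}" for Dc
    using that \<open>\<epsilon>q \<le> 1\<close> by (intro W_defined_cubic_away_from_Y0) (auto simp: Dset_def)
  ultimately show ?thesis using \<open>0 < \<epsilon>q\<close> \<open>0 < Cq\<close> by blast
qed

end
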